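(* Let $F$ be a heavy-tailed distribution on $[0,\infty)$ with mean $a\in(0,\infty]$. Then $$\liminf_{x\to\infty}\frac{1}{\overline{F}(x)}\int_0^x\overline{F}(x-y)\overline{F}(y)\,dy=2a.$$
   Context: $\overline{F}(x)=F(x,\infty)$, positive for all $x$. $F$ is heavy-tailed if $\int_0^\infty e^{\gamma x}F(dx)=\infty$ for every $\gamma>0$. *)

theory Defs
  imports "HOL-Probability.Probability"
begin

definition Fbar :: "real measure \<Rightarrow> real \<Rightarrow> real" where
  "Fbar F x = measure F {x<..}"

definition heavy_tailed :: "real measure \<Rightarrow> bool" where
  "heavy_tailed F \<longleftrightarrow> (\<forall>\<gamma>>0. (\<integral>\<^sup>+ x. ennreal (exp (\<gamma> * x)) \<partial>F) = \<infinity>)"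

definition mean :: "real measure \<Rightarrow> ennreal" where
  "mean F = (\<integral>\<^sup>+ x. ennreal x \<partial>F)"

end

theory Submission
  imports Defs "HOL-Real_Asymp.Real_Asymp"
begin

(*
  Write f for the tail of F, a = int_0^oo f for its mean and C(x) = int_0^x f(x-y) f(y) dy.

  Lower bound: f is decreasing, so the parts of C(x) with y <= A and with y >= x - A each
  contribute at least f(x) int_0^A f; hence C(x)/f(x) >= 2 int_0^A f once x > 2A.

  Upper bound: suppose C(x) >= b f(x) for x >= x0, where b > 2a. The tilted tail
  g(t) = exp(gamma t) f(t) has self-convolution exp(gamma x) C(x), and its integral over [0,X]
  is at most (int_0^X g)^2 and at least (int_0^(x0/2) f)^2 + b int_x0^X g. As F is heavy-tailed,
  int_0^oo g = oo, so X can be chosen with int_0^X g = b/2, which yields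
  (int_0^(x0/2) f)^2 + b^2/4 <= b int_0^x0 g. Letting x0 -> oo with gamma = 1/x0^2 turns this
  into a^2 + b^2/4 <= a b, i.e. (b/2 - a)^2 <= 0, a contradiction.
*)

lemma pred_in_atLeastAtMost[measurable]:
  assumes [measurable]: "f \<in> borel_measurable M" "g \<in> borel_measurable M" "h \<in> borel_measurable M"
  shows "Measurable.pred M (\<lambda>x. (f x :: real) \<in> {g x..h x})"
  unfolding atLeastAtMost_iff by measurable

lemma pred_in_atLeastLessThan[measurable]:
  assumes [measurable]: "f \<in> borel_measurable M" "g \<in> borel_measurable M" "h \<in> borel_measurable M"
  shows "Measurable.pred M (\<lambda>x. (f x :: real) \<in> {g x..<h x})"
  unfolding atLeastLessThan_iff by measurable

lemma integrable_on_bounded_measurable: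
  fixes h :: "real \<Rightarrow> real"
  assumes "h \<in> borel_measurable borel" and "\<And>t. t \<in> {a..b} \<Longrightarrow> \<bar>h t\<bar> \<le> K"
  shows "h integrable_on {a..b}"
proof (rule measurable_bounded_by_integrable_imp_integrable_real)
  show "h \<in> borel_measurable (lebesgue_on {a..b})"
    using assms(1) by (simp add: measurable_completion measurable_restrict_space1)
qed (use assms(2) in auto)

lemma set_nn_integral_eq_integral_bounded:
  fixes h :: "real \<Rightarrow> real"
  assumes "h \<in> borel_measurable borel" and "\<And>t. t \<in> {a..b} \<Longrightarrow> 0 \<le> h t \<and> h t \<le> K"
  shows "(\<integral>\<^sup>+t\<in>{a..b}. ennreal (h t) \<partial>lborel) = ennreal (integral {a..b} h)"
proof (rule nn_integral_has_integral_lebesgue')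
  have "h integrable_on {a..b}"
    by (rule integrable_on_bounded_measurable[of _ _ _ K]) (use assms in auto)
  then show "(h has_integral integral {a..b} h) {a..b}" by blast
qed (use assms(2) in auto)

lemma tendsto_set_nn_integral_atLeastAtMost:
  fixes h :: "real \<Rightarrow> ennreal"
  assumes [measurable]: "h \<in> borel_measurable borel"
  shows "((\<lambda>X. \<integral>\<^sup>+t\<in>{0..X}. h t \<partial>lborel) \<longlongrightarrow> (\<integral>\<^sup>+t\<in>{0..}. h t \<partial>lborel)) at_top"
proof (rule increasing_tendsto)
  have mono: "(\<integral>\<^sup>+t\<in>{0..X}. h t \<partial>lborel) \<le> (\<integral>\<^sup>+t\<in>{0..Y}. h t \<partial>lborel)" if "X \<le> Y" for X Y
    using that by (intro nn_integral_mono) (auto split: split_indicator)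
  have pointwise: "h t * indicator {0..} t = (SUP n. h t * indicator {0..real n} t)" for t
  proof (rule antisym)
    obtain n :: nat where "t \<le> real n" using real_arch_simple by blast
    then show "h t * indicator {0..} t \<le> (SUP n. h t * indicator {0..real n} t)"
      by (intro SUP_upper2[of n]) (auto split: split_indicator)
  qed (auto intro!: SUP_least split: split_indicator)
  have SUP_eq: "(\<integral>\<^sup>+t\<in>{0..}. h t \<partial>lborel) = (SUP n. \<integral>\<^sup>+t\<in>{0..real n}. h t \<partial>lborel)"
    unfolding pointwise
    by (rule nn_integral_monotone_convergence_SUP) (auto simp: incseq_def le_fun_def split: split_indicator)
  show "\<forall>\<^sub>F X in at_top. (\<integral>\<^sup>+t\<in>{0..X}. h t \<partial>lborel) \<le> (\<integral>\<^sup>+t\<in>{0..}. h t \<partial>lborel)"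
    by (intro always_eventually allI nn_integral_mono) (auto split: split_indicator)
  fix y assume "y < (\<integral>\<^sup>+t\<in>{0..}. h t \<partial>lborel)"
  then obtain n :: nat where "y < (\<integral>\<^sup>+t\<in>{0..real n}. h t \<partial>lborel)"
    unfolding SUP_eq less_SUP_iff by blast
  then show "\<forall>\<^sub>F X in at_top. y < (\<integral>\<^sup>+t\<in>{0..X}. h t \<partial>lborel)"
    by (auto intro: eventually_mono[OF eventually_ge_at_top[of "real n"]] less_le_trans mono)
qed

lemma nn_integral_convolution_square:
  fixes h :: "real \<Rightarrow> ennreal"
  assumes [measurable]: "h \<in> borel_measurable borel"
  shows "(\<integral>\<^sup>+x. (\<integral>\<^sup>+y. h (x - y) * h y \<partial>lborel) \<partial>lborel) = (\<integral>\<^sup>+t. h t \<partial>lborel)\<^sup>2"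
proof -
  have "(\<integral>\<^sup>+x. (\<integral>\<^sup>+y. h (x - y) * h y \<partial>lborel) \<partial>lborel)
      = (\<integral>\<^sup>+y. (\<integral>\<^sup>+x. h (x - y) \<partial>lborel) * h y \<partial>lborel)"
    by (subst lborel_pair.Fubini') (auto intro!: nn_integral_cong simp: nn_integral_multc)
  also have "\<dots> = (\<integral>\<^sup>+y. (\<integral>\<^sup>+t. h t \<partial>lborel) * h y \<partial>lborel)"
  proof -
    have "(\<integral>\<^sup>+x. h (x - y) \<partial>lborel) = (\<integral>\<^sup>+t. h t \<partial>lborel)" for y
      using nn_integral_real_affine[of h 1 "- y"] by simp
    then show ?thesis by simp
  qed
  also have "\<dots> = (\<integral>\<^sup>+t. h t \<partial>lborel)\<^sup>2"
    by (simp add: nn_integral_cmult power2_eq_square)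
  finally show ?thesis .
qed

lemma set_nn_integral_atLeastAtMost_split:
  fixes h :: "real \<Rightarrow> ennreal"
  assumes [measurable]: "h \<in> borel_measurable borel" and "a \<le> c" "c \<le> b"
  shows "(\<integral>\<^sup>+t\<in>{a..b}. h t \<partial>lborel) = (\<integral>\<^sup>+t\<in>{a..c}. h t \<partial>lborel) + (\<integral>\<^sup>+t\<in>{c<..b}. h t \<partial>lborel)"
proof -
  have "(\<integral>\<^sup>+t\<in>{a..b}. h t \<partial>lborel) = (\<integral>\<^sup>+t. h t * indicator {a..c} t + h t * indicator {c<..b} t \<partial>lborel)"
    using assms(2,3) by (intro nn_integral_cong) (auto split: split_indicator)
  then show ?thesis
    by (simp add: nn_integral_add)
qed

definition self_convolution :: "(real \<Rightarrow> ennreal) \<Rightarrow> real \<Rightarrow> ennreal" where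
  "self_convolution h x = (\<integral>\<^sup>+y\<in>{0..x}. h (x - y) * h y \<partial>lborel)"

lemma borel_measurable_self_convolution[measurable]:
  assumes [measurable]: "h \<in> borel_measurable borel"
  shows "self_convolution h \<in> borel_measurable borel"
  unfolding self_convolution_def by measurable

lemma set_nn_integral_self_convolution_le:
  assumes [measurable]: "h \<in> borel_measurable borel"
  shows "(\<integral>\<^sup>+x\<in>{0..X}. self_convolution h x \<partial>lborel) \<le> (\<integral>\<^sup>+t\<in>{0..X}. h t \<partial>lborel)\<^sup>2"
proof -
  let ?h = "\<lambda>t. h t * indicator {0..X} t"
  have "(\<integral>\<^sup>+x\<in>{0..X}. self_convolution h x \<partial>lborel) \<le> (\<integral>\<^sup>+x. (\<integral>\<^sup>+y. ?h (x - y) * ?h y \<partial>lborel) \<partial>lborel)"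
    unfolding self_convolution_def
    by (intro nn_integral_mono) (auto simp: nn_integral_multc[symmetric] intro!: nn_integral_mono split: split_indicator)
  also have "\<dots> = (\<integral>\<^sup>+t\<in>{0..X}. h t \<partial>lborel)\<^sup>2"
    by (rule nn_integral_convolution_square) measurable
  finally show ?thesis .
qed

lemma set_nn_integral_self_convolution_ge:
  assumes [measurable]: "h \<in> borel_measurable borel"
  shows "(\<integral>\<^sup>+t\<in>{0..X/2}. h t \<partial>lborel)\<^sup>2 \<le> (\<integral>\<^sup>+x\<in>{0..X}. self_convolution h x \<partial>lborel)"
proof -
  let ?h = "\<lambda>t. h t * indicator {0..X/2} t"
  have "(\<integral>\<^sup>+t\<in>{0..X/2}. h t \<partial>lborel)\<^sup>2 = (\<integral>\<^sup>+x. (\<integral>\<^sup>+y. ?h (x - y) * ?h y \<partial>lborel) \<partial>lborel)"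
    by (rule nn_integral_convolution_square[symmetric]) measurable
  also have "\<dots> \<le> (\<integral>\<^sup>+x\<in>{0..X}. self_convolution h x \<partial>lborel)"
    unfolding self_convolution_def
  proof (intro nn_integral_mono)
    show "(\<integral>\<^sup>+y. ?h (x - y) * ?h y \<partial>lborel) \<le> (\<integral>\<^sup>+y\<in>{0..x}. h (x - y) * h y \<partial>lborel) * indicator {0..X} x" for x
      by (subst nn_integral_multc[symmetric], measurable, rule nn_integral_mono) (auto split: split_indicator)
  qed
  finally show ?thesis .
qed

lemma self_convolution_exp_tilt:
  assumes [measurable]: "h \<in> borel_measurable borel"
  shows "self_convolution (\<lambda>t. ennreal (exp (\<gamma> * t)) * h t) x = ennreal (exp (\<gamma> * x)) * self_convolution h x"
proof -
  have "ennreal (exp (\<gamma> * (x - y))) * ennreal (exp (\<gamma> * y)) = ennreal (exp (\<gamma> * x))" for y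
    by (simp add: ennreal_mult[symmetric] exp_add[symmetric] algebra_simps)
  then show ?thesis
    unfolding self_convolution_def
    by (subst nn_integral_cmult[symmetric]) (auto simp: mult_ac intro!: nn_integral_cong)
qed

lemma self_convolution_eq_integral:
  fixes f :: "real \<Rightarrow> real"
  assumes [measurable]: "f \<in> borel_measurable borel" and "\<And>t. 0 \<le> f t" "\<And>t. f t \<le> 1"
  shows "self_convolution (\<lambda>t. ennreal (f t)) x = ennreal (integral {0..x} (\<lambda>y. f (x - y) * f y))"
proof -
  have "self_convolution (\<lambda>t. ennreal (f t)) x = (\<integral>\<^sup>+y\<in>{0..x}. ennreal (f (x - y) * f y) \<partial>lborel)"
    unfolding self_convolution_def using assms(2) by (simp add: ennreal_mult)
  also have "\<dots> = ennreal (integral {0..x} (\<lambda>y. f (x - y) * f y))"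
    by (rule set_nn_integral_eq_integral_bounded[where K = 1]) (use assms in \<open>auto intro: mult_le_one\<close>)
  finally show ?thesis .
qed

lemma integral_self_convolution_nonneg:
  fixes f :: "real \<Rightarrow> real"
  assumes [measurable]: "f \<in> borel_measurable borel" and "\<And>t. 0 \<le> f t" "\<And>t. f t \<le> 1"
  shows "0 \<le> integral {0..x} (\<lambda>y. f (x - y) * f y)"
proof (rule integral_nonneg)
  show "(\<lambda>y. f (x - y) * f y) integrable_on {0..x}"
    by (rule integrable_on_bounded_measurable[where K = 1]) (use assms in \<open>auto intro: mult_le_one\<close>)
qed (use assms(2) in auto)

lemma self_convolution_ge_antimono:
  fixes h :: "real \<Rightarrow> ennreal"
  assumes [measurable]: "h \<in> borel_measurable borel" and "antimono h" and "0 \<le> A" "2 * A < x"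
  shows "2 * h x * (\<integral>\<^sup>+t\<in>{0..A}. h t \<partial>lborel) \<le> self_convolution h x"
proof -
  let ?k = "\<lambda>y. h (x - y) * h y"
  have near_0: "h x * (\<integral>\<^sup>+t\<in>{0..A}. h t \<partial>lborel) \<le> (\<integral>\<^sup>+y\<in>{0..A}. ?k y \<partial>lborel)"
    by (subst nn_integral_cmult[symmetric], measurable, rule nn_integral_mono)
      (auto intro!: mult_right_mono antimonoD[OF assms(2)] split: split_indicator)
  have "(\<integral>\<^sup>+y\<in>{x-A..x}. ?k y \<partial>lborel)
      = (\<integral>\<^sup>+y. ?k (x + -1 * y) * indicator {x-A..x} (x + -1 * y) \<partial>lborel)"
    using nn_integral_real_affine[of "\<lambda>y. ?k y * indicator {x-A..x} y" "-1" x] by simp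
  also have "\<dots> = (\<integral>\<^sup>+y\<in>{0..A}. ?k y \<partial>lborel)"
    by (intro nn_integral_cong) (auto simp: mult_ac split: split_indicator)
  finally have near_x: "(\<integral>\<^sup>+y\<in>{x-A..x}. ?k y \<partial>lborel) = (\<integral>\<^sup>+y\<in>{0..A}. ?k y \<partial>lborel)" .
  have "2 * h x * (\<integral>\<^sup>+t\<in>{0..A}. h t \<partial>lborel)
      \<le> (\<integral>\<^sup>+y\<in>{0..A}. ?k y \<partial>lborel) + (\<integral>\<^sup>+y\<in>{x-A..x}. ?k y \<partial>lborel)"
    using near_0 near_x by (simp add: mult_2 add_mono distrib_right)
  also have "\<dots> = (\<integral>\<^sup>+y. ?k y * indicator {0..A} y + ?k y * indicator {x-A..x} y \<partial>lborel)"
    by (subst nn_integral_add) auto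
  also have "\<dots> \<le> self_convolution h x"
    unfolding self_convolution_def using assms(3,4)
    by (intro nn_integral_mono) (auto split: split_indicator)
  finally show ?thesis .
qed

context real_distribution
begin

lemma Fbar_nonneg: "0 \<le> Fbar M x"
  unfolding Fbar_def by simp

lemma Fbar_le_1: "Fbar M x \<le> 1"
  unfolding Fbar_def by simp

lemma antimono_Fbar: "antimono (Fbar M)"
  unfolding Fbar_def by (auto intro!: antimonoI finite_measure_mono)

lemma borel_measurable_Fbar[measurable]: "Fbar M \<in> borel_measurable borel"
proof -
  have "mono (\<lambda>x. - Fbar M x)"
    using antimono_Fbar by (auto simp: mono_def antimono_def)
  then have "(\<lambda>x. - (- Fbar M x)) \<in> borel_measurable borel"
    by (intro borel_measurable_uminus borel_measurable_mono)
  then show ?thesis by simp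
qed

lemma emeasure_greaterThan_Fbar: "emeasure M {x<..} = ennreal (Fbar M x)"
  unfolding Fbar_def by (simp add: emeasure_eq_measure)

lemma nn_integral_primitive_eq_tail:
  fixes h :: "real \<Rightarrow> ennreal"
  assumes [measurable]: "h \<in> borel_measurable borel"
  shows "(\<integral>\<^sup>+x. (\<integral>\<^sup>+t\<in>{0..<x}. h t \<partial>lborel) \<partial>M) = (\<integral>\<^sup>+t\<in>{0..}. h t * Fbar M t \<partial>lborel)"
proof -
  interpret pair_sigma_finite lborel M ..
  have "(\<integral>\<^sup>+x. (\<integral>\<^sup>+t\<in>{0..<x}. h t \<partial>lborel) \<partial>M) = (\<integral>\<^sup>+t. (\<integral>\<^sup>+x. h t * indicator {0..<x} t \<partial>M) \<partial>lborel)"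
    by (rule Fubini') measurable
  also have "\<dots> = (\<integral>\<^sup>+t. (h t * indicator {0..} t) * emeasure M {t<..} \<partial>lborel)"
  proof (rule nn_integral_cong)
    fix t
    have "(\<integral>\<^sup>+x. h t * indicator {0..<x} t \<partial>M) = (\<integral>\<^sup>+x. (h t * indicator {0..} t) * indicator {t<..} x \<partial>M)"
      by (intro nn_integral_cong) (auto split: split_indicator)
    then show "(\<integral>\<^sup>+x. h t * indicator {0..<x} t \<partial>M) = (h t * indicator {0..} t) * emeasure M {t<..}"
      by (simp add: nn_integral_cmult_indicator)
  qed
  finally show ?thesis
    by (simp add: emeasure_greaterThan_Fbar mult_ac)
qed

lemma mean_eq_set_nn_integral_Fbar: "mean M = (\<integral>\<^sup>+t\<in>{0..}. ennreal (Fbar M t) \<partial>lborel)"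
proof -
  have length: "ennreal x = (\<integral>\<^sup>+t\<in>{0..<x}. 1 \<partial>lborel)" for x :: real
    by (cases "0 \<le> x") (auto simp: ennreal_neg)
  have "mean M = (\<integral>\<^sup>+x. (\<integral>\<^sup>+t\<in>{0..<x}. 1 \<partial>lborel) \<partial>M)"
    unfolding mean_def by (rule nn_integral_cong, rule length)
  also have "\<dots> = (\<integral>\<^sup>+t\<in>{0..}. 1 * ennreal (Fbar M t) \<partial>lborel)"
    by (rule nn_integral_primitive_eq_tail) simp
  finally show ?thesis by simp
qed

lemma heavy_tailed_set_nn_integral_exp_Fbar:
  assumes "heavy_tailed M" and "0 < \<gamma>"
  shows "(\<integral>\<^sup>+t\<in>{0..}. ennreal (exp (\<gamma> * t) * Fbar M t) \<partial>lborel) = \<infinity>"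
proof -
  let ?d = "\<lambda>t. ennreal (\<gamma> * exp (\<gamma> * t))"
  have exp_le: "ennreal (exp (\<gamma> * x)) \<le> 1 + (\<integral>\<^sup>+t\<in>{0..<x}. ?d t \<partial>lborel)" for x
  proof (cases "0 \<le> x")
    case False
    then have "exp (\<gamma> * x) \<le> 1" using assms(2) by (simp add: mult_le_0_iff)
    then show ?thesis by (simp add: add_increasing2)
  next
    case True
    have "(\<integral>\<^sup>+t\<in>{0..<x}. ?d t \<partial>lborel) = (\<integral>\<^sup>+t\<in>{0..x}. ?d t \<partial>lborel)"
      by (intro nn_integral_cong_AE)
        (use AE_lborel_singleton[of x] in eventually_elim, auto split: split_indicator)
    also have "\<dots> = ennreal (exp (\<gamma> * x) - exp (\<gamma> * 0))"
      by (rule nn_integral_FTC_Icc) (use True assms(2) in \<open>auto intro!: derivative_eq_intros\<close>)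
    finally show ?thesis
      using True assms(2) by (simp add: ennreal_minus[symmetric] add_diff_inverse_ennreal)
  qed
  have "\<infinity> = (\<integral>\<^sup>+x. ennreal (exp (\<gamma> * x)) \<partial>M)"
    using assms unfolding heavy_tailed_def by auto
  also have "\<dots> \<le> (\<integral>\<^sup>+x. 1 + (\<integral>\<^sup>+t\<in>{0..<x}. ?d t \<partial>lborel) \<partial>M)"
    by (intro nn_integral_mono exp_le)
  also have "\<dots> = 1 + (\<integral>\<^sup>+t\<in>{0..}. ?d t * Fbar M t \<partial>lborel)"
    using emeasure_space_1 by (simp add: nn_integral_add nn_integral_primitive_eq_tail)
  also have "\<dots> = 1 + \<gamma> * (\<integral>\<^sup>+t\<in>{0..}. ennreal (exp (\<gamma> * t) * Fbar M t) \<partial>lborel)"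
  proof -
    have "?d t * Fbar M t = ennreal \<gamma> * ennreal (exp (\<gamma> * t) * Fbar M t)" for t
      using assms(2) Fbar_nonneg[of t] by (simp add: ennreal_mult[symmetric] mult_ac)
    then show ?thesis
      by (subst nn_integral_cmult[symmetric]) (auto simp: mult_ac)
  qed
  finally show ?thesis
    by (auto simp: top_unique ennreal_mult_eq_top_iff)
qed

lemma exp_Fbar_bounds:
  assumes "0 \<le> \<gamma>" and "t \<in> {0..X}"
  shows "0 \<le> exp (\<gamma> * t) * Fbar M t \<and> exp (\<gamma> * t) * Fbar M t \<le> exp (\<gamma> * X)"
proof -
  have "exp (\<gamma> * t) * Fbar M t \<le> exp (\<gamma> * t)"
    using Fbar_le_1[of t] by (simp add: mult_left_le)
  also have "\<dots> \<le> exp (\<gamma> * X)"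
    using assms by (auto intro: mult_left_mono)
  finally show ?thesis
    using Fbar_nonneg[of t] by simp
qed

lemma exp_Fbar_integrable_on:
  "0 \<le> \<gamma> \<Longrightarrow> (\<lambda>t. exp (\<gamma> * t) * Fbar M t) integrable_on {0..X}"
  by (rule integrable_on_bounded_measurable[where K = "exp (\<gamma> * X)"]) (use exp_Fbar_bounds in auto)

lemma set_nn_integral_exp_Fbar:
  "0 \<le> \<gamma> \<Longrightarrow> (\<integral>\<^sup>+t\<in>{0..X}. ennreal (exp (\<gamma> * t) * Fbar M t) \<partial>lborel)
    = ennreal (integral {0..X} (\<lambda>t. exp (\<gamma> * t) * Fbar M t))"
  by (rule set_nn_integral_eq_integral_bounded[where K = "exp (\<gamma> * X)"]) (use exp_Fbar_bounds in auto)

lemma tendsto_integral_Fbar_mean: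
  "((\<lambda>X. ennreal (integral {0..X} (Fbar M))) \<longlongrightarrow> mean M) at_top"
  using tendsto_set_nn_integral_atLeastAtMost[of "\<lambda>t. ennreal (Fbar M t)"] set_nn_integral_exp_Fbar[of 0]
  by (simp add: mean_eq_set_nn_integral_Fbar)

lemma heavy_tailed_filterlim_integral_exp_Fbar:
  assumes "heavy_tailed M" and "0 < \<gamma>"
  shows "filterlim (\<lambda>X. integral {0..X} (\<lambda>t. exp (\<gamma> * t) * Fbar M t)) at_top at_top"
  using tendsto_set_nn_integral_atLeastAtMost[of "\<lambda>t. ennreal (exp (\<gamma> * t) * Fbar M t)"]
    heavy_tailed_set_nn_integral_exp_Fbar[OF assms] set_nn_integral_exp_Fbar assms(2)
  by (simp add: ennreal_tendsto_top_eq_at_top[symmetric])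

lemma Liminf_self_convolution_Fbar_ge:
  assumes Fbar_pos: "\<And>x. 0 < Fbar M x"
  shows "2 * enn2ereal (mean M)
    \<le> Liminf at_top (\<lambda>x. ereal (integral {0..x} (\<lambda>y. Fbar M (x - y) * Fbar M y) / Fbar M x))"
proof -
  let ?C = "\<lambda>x. integral {0..x} (\<lambda>y. Fbar M (x - y) * Fbar M y)"
  let ?c = "\<lambda>A. integral {0..A} (Fbar M)"
  have c_nonneg: "0 \<le> ?c A" for A
    using integral_nonneg[OF exp_Fbar_integrable_on[of 0 A]] Fbar_nonneg by simp
  have bound: "2 * ?c (x/3) \<le> ?C x / Fbar M x" if "0 < x" for x
  proof -
    have "ennreal (2 * Fbar M x * ?c (x/3))
        = 2 * ennreal (Fbar M x) * (\<integral>\<^sup>+t\<in>{0..x/3}. ennreal (Fbar M t) \<partial>lborel)"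
      using set_nn_integral_exp_Fbar[of 0 "x/3"] Fbar_nonneg[of x] c_nonneg
      by (simp add: ennreal_mult)
    also have "\<dots> \<le> self_convolution (\<lambda>t. ennreal (Fbar M t)) x"
      using that antimono_Fbar
      by (intro self_convolution_ge_antimono) (auto simp: antimono_def intro: ennreal_leI)
    also have "\<dots> = ennreal (?C x)"
      by (rule self_convolution_eq_integral) (auto simp: Fbar_nonneg Fbar_le_1)
    finally have "2 * Fbar M x * ?c (x/3) \<le> ?C x"
      using integral_self_convolution_nonneg[of "Fbar M"] Fbar_nonneg Fbar_le_1 by simp
    then show ?thesis
      using Fbar_pos[of x] by (simp add: field_simps)
  qed
  have "((\<lambda>x. ennreal (?c (x/3))) \<longlongrightarrow> mean M) at_top"
    by (rule filterlim_compose[OF tendsto_integral_Fbar_mean]) real_asymp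
  then have "((\<lambda>x. 2 * ereal (?c (x/3))) \<longlongrightarrow> 2 * enn2ereal (mean M)) at_top"
    using c_nonneg by (intro tendsto_cmult_ereal) (simp_all flip: tendsto_enn2ereal_iff)
  then have "Liminf at_top (\<lambda>x. ereal (2 * ?c (x/3))) = 2 * enn2ereal (mean M)"
    by (intro lim_imp_Liminf) simp_all
  moreover have "Liminf at_top (\<lambda>x. ereal (2 * ?c (x/3))) \<le> Liminf at_top (\<lambda>x. ereal (?C x / Fbar M x))"
    using bound by (intro Liminf_mono eventually_mono[OF eventually_gt_at_top[of 0]]) simp
  ultimately show ?thesis by simp
qed

lemma self_convolution_exp_Fbar:
  "self_convolution (\<lambda>t. ennreal (exp (\<gamma> * t) * Fbar M t)) x
    = ennreal (exp (\<gamma> * x)) * ennreal (integral {0..x} (\<lambda>y. Fbar M (x - y) * Fbar M y))"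
proof -
  have "self_convolution (\<lambda>t. ennreal (exp (\<gamma> * t) * Fbar M t)) x
      = self_convolution (\<lambda>t. ennreal (exp (\<gamma> * t)) * ennreal (Fbar M t)) x"
    by (simp add: ennreal_mult Fbar_nonneg)
  also have "\<dots> = ennreal (exp (\<gamma> * x)) * self_convolution (\<lambda>t. ennreal (Fbar M t)) x"
    by (rule self_convolution_exp_tilt) measurable
  finally show ?thesis
    by (simp add: self_convolution_eq_integral Fbar_nonneg Fbar_le_1)
qed

lemma integral_exp_Fbar_attains:
  assumes "heavy_tailed M" and \<gamma>: "0 < \<gamma>" and x0: "0 \<le> x0"
    and "integral {0..x0} (\<lambda>t. exp (\<gamma> * t) * Fbar M t) \<le> v"
  obtains X where "x0 \<le> X" and "integral {0..X} (\<lambda>t. exp (\<gamma> * t) * Fbar M t) = v"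
proof -
  let ?S = "\<lambda>X. integral {0..X} (\<lambda>t. exp (\<gamma> * t) * Fbar M t)"
  have "\<forall>\<^sub>F X in at_top. v \<le> ?S X"
    using heavy_tailed_filterlim_integral_exp_Fbar[OF assms(1) \<gamma>] by (simp only: filterlim_at_top)
  then obtain N where "\<And>X. N \<le> X \<Longrightarrow> v \<le> ?S X"
    by (auto simp: eventually_at_top_linorder)
  then obtain X1 where "x0 \<le> X1" and "v \<le> ?S X1"
    by (meson max.cobounded1 max.cobounded2)
  moreover have "continuous_on {0..X1} ?S"
    using \<gamma> by (intro indefinite_integral_continuous_1 exp_Fbar_integrable_on) simp
  then have "continuous_on {x0..X1} ?S"
    by (rule continuous_on_subset) (use x0 in auto)
  ultimately show ?thesis
    using IVT'[of ?S x0 v X1] assms(4) that by auto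
qed

lemma set_nn_integral_self_convolution_exp_Fbar_ge:
  assumes "0 \<le> \<gamma>"
  shows "ennreal ((integral {0..X/2} (Fbar M))\<^sup>2)
    \<le> (\<integral>\<^sup>+x\<in>{0..X}. self_convolution (\<lambda>t. ennreal (exp (\<gamma> * t) * Fbar M t)) x \<partial>lborel)"
proof -
  let ?F = "\<lambda>t. ennreal (Fbar M t)"
  have "ennreal ((integral {0..X/2} (Fbar M))\<^sup>2) = (\<integral>\<^sup>+t\<in>{0..X/2}. ?F t \<partial>lborel)\<^sup>2"
    using set_nn_integral_exp_Fbar[of 0 "X/2"] integral_nonneg[OF exp_Fbar_integrable_on[of 0 "X/2"]] Fbar_nonneg
    by (simp add: ennreal_power)
  also have "\<dots> \<le> (\<integral>\<^sup>+x\<in>{0..X}. self_convolution ?F x \<partial>lborel)"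
    by (rule set_nn_integral_self_convolution_ge) measurable
  also have "\<dots> \<le> (\<integral>\<^sup>+x\<in>{0..X}. self_convolution (\<lambda>t. ennreal (exp (\<gamma> * t) * Fbar M t)) x \<partial>lborel)"
  proof (intro nn_integral_mono)
    fix x
    have "1 * self_convolution ?F x \<le> ennreal (exp (\<gamma> * x)) * self_convolution ?F x" if "0 \<le> x"
      using assms that by (intro mult_right_mono) auto
    then show "self_convolution ?F x * indicator {0..X} x
        \<le> self_convolution (\<lambda>t. ennreal (exp (\<gamma> * t) * Fbar M t)) x * indicator {0..X} x"
      using self_convolution_exp_Fbar[of 0 x] self_convolution_exp_Fbar[of \<gamma> x]
      by (auto split: split_indicator)
  qed
  finally show ?thesis .
qed

lemma tilted_self_convolution_bound:
  fixes \<gamma> x0 b :: real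
  defines "S \<equiv> \<lambda>X. integral {0..X} (\<lambda>t. exp (\<gamma> * t) * Fbar M t)"
  assumes heavy: "heavy_tailed M" and \<gamma>: "0 < \<gamma>" and x0: "0 \<le> x0" and b: "0 < b"
    and dominated: "\<And>x. x0 \<le> x \<Longrightarrow> b * Fbar M x \<le> integral {0..x} (\<lambda>y. Fbar M (x - y) * Fbar M y)"
    and S_x0: "S x0 \<le> b/2"
  shows "(integral {0..x0/2} (Fbar M))\<^sup>2 + b\<^sup>2/4 \<le> b * S x0"
proof -
  let ?G = "\<lambda>t. ennreal (exp (\<gamma> * t) * Fbar M t)"
  have G_S: "(\<integral>\<^sup>+t\<in>{0..X}. ?G t \<partial>lborel) = ennreal (S X)" for X
    unfolding S_def using set_nn_integral_exp_Fbar \<gamma> by simp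
  have S_nonneg: "0 \<le> S X" for X
    unfolding S_def using exp_Fbar_bounds \<gamma> by (intro integral_nonneg exp_Fbar_integrable_on) auto
  obtain X where X: "x0 \<le> X" "S X = b/2"
    using integral_exp_Fbar_attains[OF heavy \<gamma> x0] S_x0 unfolding S_def by blast
  have total: "(\<integral>\<^sup>+x\<in>{0..X}. self_convolution ?G x \<partial>lborel) \<le> ennreal ((b/2)\<^sup>2)"
    using set_nn_integral_self_convolution_le[of ?G X] G_S X(2) b by (simp add: ennreal_power)
  have near: "ennreal ((integral {0..x0/2} (Fbar M))\<^sup>2) \<le> (\<integral>\<^sup>+x\<in>{0..x0}. self_convolution ?G x \<partial>lborel)"
    using set_nn_integral_self_convolution_exp_Fbar_ge \<gamma> by simp
  have "ennreal b * ?G x \<le> self_convolution ?G x" if "x0 \<le> x" for x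
  proof -
    have "ennreal b * ?G x = ennreal (exp (\<gamma> * x) * (b * Fbar M x))"
      using b Fbar_nonneg[of x] by (simp add: ennreal_mult[symmetric] mult_ac)
    also have "\<dots> \<le> ennreal (exp (\<gamma> * x) * integral {0..x} (\<lambda>y. Fbar M (x - y) * Fbar M y))"
      using dominated[OF that] by (intro ennreal_leI mult_left_mono) auto
    also have "\<dots> = self_convolution ?G x"
      by (subst self_convolution_exp_Fbar) (simp add: ennreal_mult')
    finally show ?thesis .
  qed
  then have far: "ennreal b * (\<integral>\<^sup>+x\<in>{x0<..X}. ?G x \<partial>lborel) \<le> (\<integral>\<^sup>+x\<in>{x0<..X}. self_convolution ?G x \<partial>lborel)"
    by (subst nn_integral_cmult[symmetric]) (auto intro!: nn_integral_mono split: split_indicator)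
  have "ennreal (b/2) = ennreal (S x0) + (\<integral>\<^sup>+x\<in>{x0<..X}. ?G x \<partial>lborel)"
    using set_nn_integral_atLeastAtMost_split[of ?G 0 x0 X] G_S X x0 by simp
  then have "(\<integral>\<^sup>+x\<in>{x0<..X}. ?G x \<partial>lborel) = ennreal (b/2) - ennreal (S x0)"
    by simp
  then have G_far: "(\<integral>\<^sup>+x\<in>{x0<..X}. ?G x \<partial>lborel) = ennreal (b/2 - S x0)"
    using S_nonneg[of x0] by (simp add: ennreal_minus)
  have "ennreal ((integral {0..x0/2} (Fbar M))\<^sup>2 + b * (b/2 - S x0)) \<le> ennreal ((b/2)\<^sup>2)"
    using add_mono[OF near far] total set_nn_integral_atLeastAtMost_split[of "self_convolution ?G" 0 x0 X]
      x0 X(1) S_x0 b by (simp add: G_far ennreal_mult)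
  then show ?thesis
    by (simp add: power2_eq_square algebra_simps)
qed

lemma tendsto_integral_Fbar_finite_mean:
  assumes "mean M = ennreal a" and "0 \<le> a"
  shows "((\<lambda>X. integral {0..X} (Fbar M)) \<longlongrightarrow> a) at_top"
  using tendsto_integral_Fbar_mean assms integral_nonneg[OF exp_Fbar_integrable_on[of 0]] Fbar_nonneg
  by (intro tendsto_ennrealD) auto

lemma tendsto_integral_exp_Fbar_vanishing_tilt:
  assumes "mean M = ennreal a" and "0 \<le> a"
  shows "((\<lambda>X. integral {0..X} (\<lambda>t. exp (1 / X\<^sup>2 * t) * Fbar M t)) \<longlongrightarrow> a) at_top"
proof (rule tendsto_sandwich)
  let ?I = "\<lambda>X. integral {0..X} (Fbar M)"
  have "Fbar M t \<le> exp (1 / X\<^sup>2 * t) * Fbar M t" if "0 \<le> t" for X t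
    using mult_right_mono[of 1 "exp (1 / X\<^sup>2 * t)" "Fbar M t"] Fbar_nonneg[of t] that by simp
  then show "\<forall>\<^sub>F X in at_top. ?I X \<le> integral {0..X} (\<lambda>t. exp (1 / X\<^sup>2 * t) * Fbar M t)"
    using exp_Fbar_integrable_on[of 0] exp_Fbar_integrable_on[of "1 / _\<^sup>2"]
    by (intro always_eventually allI integral_le) auto
  have "integral {0..X} (\<lambda>t. exp (1 / X\<^sup>2 * t) * Fbar M t) \<le> exp (1 / X) * ?I X" if "0 < X" for X
  proof -
    have "exp (1 / X\<^sup>2 * t) * Fbar M t \<le> exp (1 / X) * Fbar M t" if "t \<in> {0..X}" for t
      using that \<open>0 < X\<close> Fbar_nonneg[of t]
      by (intro mult_right_mono) (auto simp: power2_eq_square divide_simps)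
    moreover have "Fbar M integrable_on {0..X}"
      using exp_Fbar_integrable_on[of 0 X] by simp
    ultimately have "integral {0..X} (\<lambda>t. exp (1 / X\<^sup>2 * t) * Fbar M t) \<le> integral {0..X} (\<lambda>t. exp (1 / X) * Fbar M t)"
      by (intro integral_le exp_Fbar_integrable_on integrable_on_cmult_left) auto
    then show ?thesis by simp
  qed
  then show "\<forall>\<^sub>F X in at_top. integral {0..X} (\<lambda>t. exp (1 / X\<^sup>2 * t) * Fbar M t) \<le> exp (1 / X) * ?I X"
    by (intro eventually_mono[OF eventually_gt_at_top[of 0]])
  have "((\<lambda>X::real. exp (1 / X)) \<longlongrightarrow> 1) at_top"
    by real_asymp
  then show "((\<lambda>X. exp (1 / X) * ?I X) \<longlongrightarrow> a) at_top"
    using tendsto_mult[OF _ tendsto_integral_Fbar_finite_mean[OF assms]] by fastforce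
qed (rule tendsto_integral_Fbar_finite_mean[OF assms])

lemma Liminf_self_convolution_Fbar_le:
  assumes Fbar_pos: "\<And>x. 0 < Fbar M x" and heavy: "heavy_tailed M"
  shows "Liminf at_top (\<lambda>x. ereal (integral {0..x} (\<lambda>y. Fbar M (x - y) * Fbar M y) / Fbar M x))
    \<le> 2 * enn2ereal (mean M)"
proof (cases "mean M")
  case (real a)
  let ?C = "\<lambda>x. integral {0..x} (\<lambda>y. Fbar M (x - y) * Fbar M y)"
  let ?c = "\<lambda>x0. integral {0..x0/2} (Fbar M)"
  define S where "S x0 = integral {0..x0} (\<lambda>t. exp (1 / x0\<^sup>2 * t) * Fbar M t)" for x0
  show ?thesis
  proof (rule ccontr)
    assume "\<not> ?thesis"
    then obtain b where b: "2 * a < b" and "ereal b < Liminf at_top (\<lambda>x. ereal (?C x / Fbar M x))"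
      using real ereal_dense2 by (fastforce simp: not_le)
    then have "\<forall>\<^sub>F x in at_top. ereal b < ereal (?C x / Fbar M x)"
      using le_Liminf_iff[THEN iffD1, OF order_refl] by blast
    then obtain x1 where dominated: "\<And>x. x1 \<le> x \<Longrightarrow> b * Fbar M x \<le> ?C x"
      using Fbar_pos by (fastforce simp: eventually_at_top_linorder field_simps)
    have S_lim: "(S \<longlongrightarrow> a) at_top"
      unfolding S_def using tendsto_integral_exp_Fbar_vanishing_tilt real by simp
    have c_lim: "(?c \<longlongrightarrow> a) at_top"
      by (rule filterlim_compose[OF tendsto_integral_Fbar_finite_mean[OF real(2,1)]]) real_asymp
    have "\<forall>\<^sub>F x0 in at_top. S x0 < b/2"
      using S_lim b by (intro order_tendstoD(2)) auto
    then have "\<forall>\<^sub>F x0 in at_top. (?c x0)\<^sup>2 + b\<^sup>2/4 \<le> b * S x0"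
      using eventually_ge_at_top[of "max x1 1"]
    proof eventually_elim
      case (elim x0)
      show ?case
        unfolding S_def
        by (intro tilted_self_convolution_bound heavy dominated) (use elim b real in \<open>auto simp: S_def\<close>)
    qed
    moreover have "((\<lambda>x0. (?c x0)\<^sup>2 + b\<^sup>2/4) \<longlongrightarrow> a\<^sup>2 + b\<^sup>2/4) at_top"
      by (intro tendsto_intros c_lim)
    moreover have "((\<lambda>x0. b * S x0) \<longlongrightarrow> b * a) at_top"
      by (intro tendsto_intros S_lim)
    ultimately have "a\<^sup>2 + b\<^sup>2/4 \<le> b * a"
      by (intro tendsto_le[of at_top]) auto
    moreover have "0 < (b/2 - a)\<^sup>2"
      using b by simp
    ultimately show False
      by (simp add: power2_eq_square algebra_simps)
  qed
qed simp_all

end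

theorem lemma4:
  fixes F :: "real measure"
  assumes "prob_space F"
    and "sets F = sets borel"
    and "emeasure F {..<0} = 0"
    and "\<And>x. Fbar F x > 0"
    and "heavy_tailed F"
    and "mean F > 0"
  shows "Liminf at_top (\<lambda>x. ereal (integral {0..x} (\<lambda>y. Fbar F (x - y) * Fbar F y) / Fbar F x))
           = 2 * enn2ereal (mean F)"
proof -
  interpret real_distribution F
    using assms(1,2) by (simp add: real_distribution_def real_distribution_axioms_def)
  show ?thesis
    by (intro antisym Liminf_self_convolution_Fbar_le Liminf_self_convolution_Fbar_ge assms(4,5))
qed

end
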